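(* Let $\{X_i:i\in I\}$ be a collection of random variables on $\Omega$ and let $P$ assign to each $X_i$ an extended-real marginal prevision $P(X_i)$. Then $P$ is extended-coherent if and only if the collection $\{P(X_i):i\in I\}$ is coherent$_1$.
   Context: Let $\Omega$ be a nonempty set; random variables are real-valued functions on $\Omega$. A marginal prevision $P(X)$ is an extended real number. Coherence$_1$ (marginal case): $\{P(X_i):i\in I\}$ is coherent$_1$ if for every finite $\{i_1,\dots,i_n\}\subseteq I$, all real $\alpha_1,\dots,\alpha_n$ with $\alpha_j\ge0$ whenever $P(X_{i_j})=+\infty$ and $\alpha_j\le 0$ whenever $P(X_{i_j})=-\infty$, and all real $c_1,\dots,c_n$ with $c_j=P(X_{i_j})$ whenever $P(X_{i_j})$ is finite, we have $\sup_\omega\sum_{j=1}^n\alpha_j[X_{i_j}(\omega)-c_j]\ge 0$. Extended-coherence: $P$ is extended-coherent if \[\inf_{\omega\in\Omega}\sum_{j=1}^n\alpha_jX_{i_j}(\omega)\le\sum_{j=1}^n\alpha_jP(X_{i_j})\le\sup_{\omega\in\Omega}\sum_{j=1}^n\alpha_jX_{i_j}(\omega)\] for every finite $n$, all $i_1,\dots,i_n\in I$, and all real $\alpha_1,\dots,\alpha_n$ such that all infinite terms of the form $\alpha_jP(X_{i_j})$ have the same sign. *)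

theory Defs
  imports "HOL-Analysis.Analysis" "HOL-Library.Extended_Real"
begin

(* Omega is the universe of type 'w (nonempty), the index set I is the universe of type 'i.
   X i is the random variable X_i : Omega -> real, P i is the extended-real prevision P(X_i). *)

definition coherent1 :: "('i \<Rightarrow> 'w \<Rightarrow> real) \<Rightarrow> ('i \<Rightarrow> ereal) \<Rightarrow> bool" where
  "coherent1 X P \<longleftrightarrow>
     (\<forall>J :: 'i set. \<forall>\<alpha> :: 'i \<Rightarrow> real. \<forall>c :: 'i \<Rightarrow> real.
        finite J \<longrightarrow>
        (\<forall>j\<in>J. P j = \<infinity> \<longrightarrow> \<alpha> j \<ge> 0) \<longrightarrow>
        (\<forall>j\<in>J. P j = -\<infinity> \<longrightarrow> \<alpha> j \<le> 0) \<longrightarrow>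
        (\<forall>j\<in>J. \<bar>P j\<bar> \<noteq> \<infinity> \<longrightarrow> ereal (c j) = P j) \<longrightarrow>
        (SUP \<omega>. ereal (\<Sum>j\<in>J. \<alpha> j * (X j \<omega> - c j))) \<ge> 0)"

definition extended_coherent :: "('i \<Rightarrow> 'w \<Rightarrow> real) \<Rightarrow> ('i \<Rightarrow> ereal) \<Rightarrow> bool" where
  "extended_coherent X P \<longleftrightarrow>
     (\<forall>n :: nat. \<forall>idx :: nat \<Rightarrow> 'i. \<forall>\<alpha> :: nat \<Rightarrow> real.
        (\<forall>j<n. \<forall>k<n. \<bar>ereal (\<alpha> j) * P (idx j)\<bar> = \<infinity> \<longrightarrow> \<bar>ereal (\<alpha> k) * P (idx k)\<bar> = \<infinity> \<longrightarrow>
            ereal (\<alpha> j) * P (idx j) = ereal (\<alpha> k) * P (idx k)) \<longrightarrow>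
        (INF \<omega>. ereal (\<Sum>j<n. \<alpha> j * X (idx j) \<omega>)) \<le> (\<Sum>j<n. ereal (\<alpha> j) * P (idx j)) \<and>
        (\<Sum>j<n. ereal (\<alpha> j) * P (idx j)) \<le> (SUP \<omega>. ereal (\<Sum>j<n. \<alpha> j * X (idx j) \<omega>)))"

end

theory Submission
  imports Defs
begin

text \<open>If every infinite term of a combination is \<open>+\<infinity>\<close>, then termwise
\<open>\<alpha>\<^sub>j c\<^sub>j \<le> \<alpha>\<^sub>j P(X\<^sub>j)\<close>, so the upper half of extended coherence yields coherence\<open>\<^sub>1\<close>.
Conversely, after merging repeated indices, coherence\<open>\<^sub>1\<close> with \<open>c = P\<close> on the finite
previsions bounds a combination without \<open>-\<infinity>\<close> terms from above by the supremum of the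
gamble. If some term is \<open>+\<infinity>\<close>, the value of \<open>c\<close> at that index is unconstrained and can
make \<open>\<Sum> \<alpha>\<^sub>j c\<^sub>j\<close> arbitrarily large, so the supremum is \<open>+\<infinity>\<close>. Lower bounds follow by
replacing \<open>\<alpha>\<close> with \<open>-\<alpha>\<close>, and a combination with a \<open>-\<infinity>\<close> term and no \<open>+\<infinity>\<close> term sums
to \<open>-\<infinity>\<close>.\<close>

lemma ereal_mult_neq_MInfty_iff:
  "ereal a * p \<noteq> -\<infinity> \<longleftrightarrow> (p = \<infinity> \<longrightarrow> 0 \<le> a) \<and> (p = -\<infinity> \<longrightarrow> a \<le> 0)"
  by (cases p) (auto simp: ereal_mult_infty not_le)

lemma ereal_mult_finite_eq:
  assumes "\<bar>ereal a * p\<bar> \<noteq> \<infinity>"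
  shows "ereal a * p = ereal (a * real_of_ereal p)"
  using assms by (cases p; cases "a = 0") (auto split: if_splits)

lemma ereal_sum_uminus:
  fixes f :: "'a \<Rightarrow> ereal"
  assumes "\<And>x. x \<in> A \<Longrightarrow> f x \<noteq> \<infinity>"
  shows "(\<Sum>x\<in>A. - f x) = - sum f A"
  using assms
proof (induction A rule: infinite_finite_induct)
  case (insert x A)
  have "f x \<noteq> \<infinity>" "sum f A \<noteq> \<infinity>"
    using insert.prems insert.hyps by (auto simp: sum_Pinfty)
  then show ?case using insert by (cases "f x"; cases "sum f A") auto
qed simp_all

lemma sum_MInfty:
  fixes f :: "'a \<Rightarrow> ereal"
  assumes "finite A" "\<And>x. x \<in> A \<Longrightarrow> f x \<noteq> \<infinity>" "i \<in> A" "f i = -\<infinity>"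
  shows "sum f A = -\<infinity>"
proof -
  have "(\<Sum>x\<in>A. - f x) = \<infinity>"
    using assms by (auto simp: sum_Pinfty intro!: bexI[of _ i])
  then show ?thesis using ereal_sum_uminus[of A f] assms(2) by (simp add: ereal_uminus_eq_reorder)
qed

lemma SUP_ereal_diff_nonneg_iff:
  "0 \<le> (SUP \<omega>. ereal (f \<omega> - c)) \<longleftrightarrow> ereal c \<le> (SUP \<omega>. ereal (f \<omega>))"
proof -
  have "(SUP \<omega>. ereal (f \<omega> - c)) = (SUP \<omega>. ereal (f \<omega>)) - ereal c"
    using SUP_ereal_minus_left[of UNIV "ereal c" "\<lambda>\<omega>. ereal (f \<omega>)"] by simp
  then show ?thesis by (cases "SUP \<omega>. ereal (f \<omega>)") auto
qed

lemma sum_regroup_by_index: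
  fixes idx :: "nat \<Rightarrow> 'i" and g :: "'i \<Rightarrow> real"
  shows "(\<Sum>i\<in>idx ` {..<n}. (\<Sum>j\<in>{j\<in>{..<n}. idx j = i}. \<alpha> j) * g i) = (\<Sum>j<n. \<alpha> j * g (idx j))"
proof -
  have "(\<Sum>i\<in>idx ` {..<n}. (\<Sum>j\<in>{j\<in>{..<n}. idx j = i}. \<alpha> j) * g i)
      = (\<Sum>i\<in>idx ` {..<n}. \<Sum>j\<in>{j\<in>{..<n}. idx j = i}. \<alpha> j * g (idx j))"
    by (rule sum.cong) (auto simp: sum_distrib_right)
  also have "\<dots> = (\<Sum>j<n. \<alpha> j * g (idx j))"
    by (rule sum.group) auto
  finally show ?thesis .
qed

lemma ereal_sum_mult_neq_MInfty:
  assumes "\<And>j. j \<in> S \<Longrightarrow> ereal (\<alpha> j) * p \<noteq> -\<infinity>"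
  shows "ereal (\<Sum>j\<in>S. \<alpha> j) * p \<noteq> -\<infinity>"
  using assms unfolding ereal_mult_neq_MInfty_iff by (meson sum_nonneg sum_nonpos)

lemma ereal_sum_mult_eq_PInfty:
  assumes "finite S" "\<And>j. j \<in> S \<Longrightarrow> ereal (\<alpha> j) * p \<noteq> -\<infinity>"
    and "k \<in> S" "ereal (\<alpha> k) * p = \<infinity>"
  shows "ereal (\<Sum>j\<in>S. \<alpha> j) * p = \<infinity>"
proof (cases p)
  case PInf
  then have "0 < \<alpha> k" "\<And>j. j \<in> S \<Longrightarrow> 0 \<le> \<alpha> j"
    using assms(2,4) unfolding ereal_mult_neq_MInfty_iff by (auto split: if_splits)
  then have "0 < (\<Sum>j\<in>S. \<alpha> j)"
    using member_le_sum[OF assms(3), of \<alpha>] assms(1) by fastforce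
  then show ?thesis using PInf by simp
next
  case MInf
  then have "\<alpha> k < 0" "\<And>j. j \<in> S \<Longrightarrow> \<alpha> j \<le> 0"
    using assms(2,4) unfolding ereal_mult_neq_MInfty_iff by (auto split: if_splits)
  then have "(\<Sum>j\<in>S. \<alpha> j) < 0"
    using member_le_sum[OF assms(3), of "\<lambda>j. - \<alpha> j"] assms(1) by (fastforce simp: sum_negf)
  then show ?thesis using MInf by simp
qed (use assms(4) in simp)

lemma coherent1_indexed_le_SUP:
  fixes X :: "'i \<Rightarrow> 'w \<Rightarrow> real" and P :: "'i \<Rightarrow> ereal" and idx :: "nat \<Rightarrow> 'i"
  assumes coh: "coherent1 X P"
    and sign: "\<And>j. j < n \<Longrightarrow> ereal (\<alpha> j) * P (idx j) \<noteq> -\<infinity>"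
    and c: "\<And>i. \<bar>P i\<bar> \<noteq> \<infinity> \<Longrightarrow> ereal (c i) = P i"
  shows "ereal (\<Sum>j<n. \<alpha> j * c (idx j)) \<le> (SUP \<omega>. ereal (\<Sum>j<n. \<alpha> j * X (idx j) \<omega>))"
proof -
  define J where "J = idx ` {..<n}"
  define \<beta> where "\<beta> i = (\<Sum>j\<in>{j\<in>{..<n}. idx j = i}. \<alpha> j)" for i
  have "ereal (\<beta> i) * P i \<noteq> -\<infinity>" for i
    unfolding \<beta>_def by (rule ereal_sum_mult_neq_MInfty) (use sign in auto)
  then have "\<forall>i\<in>J. P i = \<infinity> \<longrightarrow> 0 \<le> \<beta> i" "\<forall>i\<in>J. P i = -\<infinity> \<longrightarrow> \<beta> i \<le> 0"
    unfolding ereal_mult_neq_MInfty_iff by blast+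
  moreover have "finite J" unfolding J_def by simp
  ultimately have "0 \<le> (SUP \<omega>. ereal (\<Sum>i\<in>J. \<beta> i * (X i \<omega> - c i)))"
    using c by (intro coh[unfolded coherent1_def, rule_format]) auto
  moreover have "(\<Sum>i\<in>J. \<beta> i * (X i \<omega> - c i))
      = (\<Sum>j<n. \<alpha> j * X (idx j) \<omega>) - (\<Sum>j<n. \<alpha> j * c (idx j))" for \<omega>
    unfolding J_def \<beta>_def sum_regroup_by_index by (simp add: right_diff_distrib sum_subtractf)
  ultimately show ?thesis by (simp add: SUP_ereal_diff_nonneg_iff)
qed

lemma coherent1_sum_le_SUP:
  fixes X :: "'i \<Rightarrow> 'w \<Rightarrow> real" and P :: "'i \<Rightarrow> ereal" and idx :: "nat \<Rightarrow> 'i"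
  assumes coh: "coherent1 X P"
    and sign: "\<And>j. j < n \<Longrightarrow> ereal (\<alpha> j) * P (idx j) \<noteq> -\<infinity>"
  shows "(\<Sum>j<n. ereal (\<alpha> j) * P (idx j)) \<le> (SUP \<omega>. ereal (\<Sum>j<n. \<alpha> j * X (idx j) \<omega>))"
proof (cases "\<exists>j0<n. ereal (\<alpha> j0) * P (idx j0) = \<infinity>")
  case True
  then obtain j0 where j0: "j0 < n" "ereal (\<alpha> j0) * P (idx j0) = \<infinity>" by blast
  define S where "S = {j\<in>{..<n}. idx j = idx j0}"
  define A where "A = (\<Sum>j\<in>S. \<alpha> j)"
  have sign_S: "ereal (\<alpha> j) * P (idx j0) \<noteq> -\<infinity>" if "j \<in> S" for j
    using that sign unfolding S_def by (metis (mono_tags) lessThan_iff mem_Collect_eq)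
  have "ereal A * P (idx j0) = \<infinity>"
    unfolding A_def by (rule ereal_sum_mult_eq_PInfty[OF _ sign_S, where k = j0]) (use j0 in \<open>auto simp: S_def\<close>)
  then have A: "A \<noteq> 0" and inf: "\<bar>P (idx j0)\<bar> = \<infinity>" by auto
  have "ereal M \<le> (SUP \<omega>. ereal (\<Sum>j<n. \<alpha> j * X (idx j) \<omega>))" for M
  proof -
    \<comment> \<open>\<open>P (idx j0)\<close> is infinite, so \<open>c (idx j0)\<close> is free and is tuned to make \<open>\<Sum> \<alpha> c = M\<close>.\<close>
    define C where "C = (\<Sum>j<n. \<alpha> j * real_of_ereal (P (idx j)))"
    define K where "K = (M - C) / A"
    define c where "c i = real_of_ereal (P i) + (if i = idx j0 then K else 0)" for i
    have "(\<Sum>j<n. \<alpha> j * (if idx j = idx j0 then K else 0)) = A * K"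
      unfolding A_def S_def sum_distrib_right by (subst sum.inter_filter) (auto intro!: sum.cong)
    then have "(\<Sum>j<n. \<alpha> j * c (idx j)) = M"
      using A by (simp add: c_def C_def K_def distrib_left sum.distrib)
    moreover have "ereal (\<Sum>j<n. \<alpha> j * c (idx j)) \<le> (SUP \<omega>. ereal (\<Sum>j<n. \<alpha> j * X (idx j) \<omega>))"
      by (rule coherent1_indexed_le_SUP[OF coh sign]) (use inf in \<open>auto simp: c_def\<close>)
    ultimately show ?thesis by simp
  qed
  then have "(SUP \<omega>. ereal (\<Sum>j<n. \<alpha> j * X (idx j) \<omega>)) = \<infinity>"
    by (rule ereal_top)
  then show ?thesis by simp
next
  case False
  then have fin: "\<bar>ereal (\<alpha> j) * P (idx j)\<bar> \<noteq> \<infinity>" if "j < n" for j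
    using sign[OF that] that by auto
  have "(\<Sum>j<n. ereal (\<alpha> j) * P (idx j)) = ereal (\<Sum>j<n. \<alpha> j * real_of_ereal (P (idx j)))"
    using ereal_mult_finite_eq[OF fin] by simp
  also have "\<dots> \<le> (SUP \<omega>. ereal (\<Sum>j<n. \<alpha> j * X (idx j) \<omega>))"
    by (rule coherent1_indexed_le_SUP[OF coh sign]) auto
  finally show ?thesis .
qed

lemma coherent1_INF_le_sum:
  fixes X :: "'i \<Rightarrow> 'w \<Rightarrow> real" and P :: "'i \<Rightarrow> ereal" and idx :: "nat \<Rightarrow> 'i"
  assumes coh: "coherent1 X P"
    and sign: "\<And>j. j < n \<Longrightarrow> ereal (\<alpha> j) * P (idx j) \<noteq> \<infinity>"
  shows "(INF \<omega>. ereal (\<Sum>j<n. \<alpha> j * X (idx j) \<omega>)) \<le> (\<Sum>j<n. ereal (\<alpha> j) * P (idx j))"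
proof -
  have neg: "ereal (- a) * p = - (ereal a * p)" for a p
    by (metis ereal_mult_minus_left uminus_ereal.simps(1))
  have "(\<Sum>j<n. ereal (- \<alpha> j) * P (idx j)) \<le> (SUP \<omega>. ereal (\<Sum>j<n. - \<alpha> j * X (idx j) \<omega>))"
    by (rule coherent1_sum_le_SUP[OF coh]) (use sign in \<open>simp only: neg ereal_uminus_eq_iff, simp\<close>)
  moreover have "(\<Sum>j<n. ereal (- \<alpha> j) * P (idx j)) = - (\<Sum>j<n. ereal (\<alpha> j) * P (idx j))"
    unfolding neg by (rule ereal_sum_uminus) (use sign in simp)
  moreover have "(SUP \<omega>. ereal (\<Sum>j<n. - \<alpha> j * X (idx j) \<omega>)) = - (INF \<omega>. ereal (\<Sum>j<n. \<alpha> j * X (idx j) \<omega>))"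
    using ereal_SUP_uminus_eq[of "\<lambda>\<omega>. ereal (\<Sum>j<n. \<alpha> j * X (idx j) \<omega>)" UNIV] by (simp add: sum_negf)
  ultimately show ?thesis by simp
qed

lemma extended_coherent_sum_le_SUP:
  fixes X :: "'i \<Rightarrow> 'w \<Rightarrow> real" and P :: "'i \<Rightarrow> ereal"
  assumes ext: "extended_coherent X P" and "finite J"
    and sign: "\<And>i. i \<in> J \<Longrightarrow> ereal (\<alpha> i) * P i \<noteq> -\<infinity>"
  shows "(\<Sum>i\<in>J. ereal (\<alpha> i) * P i) \<le> (SUP \<omega>. ereal (\<Sum>i\<in>J. \<alpha> i * X i \<omega>))"
proof -
  obtain h where h: "bij_betw h {..<card J} J"
    using ex_bij_betw_nat_finite[OF \<open>finite J\<close>] by (auto simp: atLeast0LessThan)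
  have infinite_term: "ereal (\<alpha> (h j)) * P (h j) = \<infinity>"
    if "j < card J" "\<bar>ereal (\<alpha> (h j)) * P (h j)\<bar> = \<infinity>" for j
    using that sign[OF bij_betwE[OF h, rule_format, of j]] by auto
  have same_sign: "\<forall>j<card J. \<forall>k<card J. \<bar>ereal (\<alpha> (h j)) * P (h j)\<bar> = \<infinity> \<longrightarrow>
      \<bar>ereal (\<alpha> (h k)) * P (h k)\<bar> = \<infinity> \<longrightarrow> ereal (\<alpha> (h j)) * P (h j) = ereal (\<alpha> (h k)) * P (h k)"
    by (metis infinite_term)
  have "(\<Sum>j<card J. ereal (\<alpha> (h j)) * P (h j))
      \<le> (SUP \<omega>. ereal (\<Sum>j<card J. \<alpha> (h j) * X (h j) \<omega>))"
    using ext[unfolded extended_coherent_def, THEN spec, THEN spec, THEN spec, THEN mp, OF same_sign] by simp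
  moreover have "(\<Sum>j<card J. ereal (\<alpha> (h j)) * P (h j)) = (\<Sum>i\<in>J. ereal (\<alpha> i) * P i)"
    by (rule sum.reindex_bij_betw[OF h])
  moreover have "(\<Sum>j<card J. \<alpha> (h j) * X (h j) \<omega>) = (\<Sum>i\<in>J. \<alpha> i * X i \<omega>)" for \<omega>
    by (rule sum.reindex_bij_betw[OF h])
  ultimately show ?thesis by simp
qed

lemma coherent1_if_extended_coherent:
  fixes X :: "'i \<Rightarrow> 'w \<Rightarrow> real" and P :: "'i \<Rightarrow> ereal"
  assumes ext: "extended_coherent X P"
  shows "coherent1 X P"
  unfolding coherent1_def
proof (intro allI impI)
  fix J :: "'i set" and \<alpha> c :: "'i \<Rightarrow> real"
  assume fin: "finite J"
    and pos: "\<forall>i\<in>J. P i = \<infinity> \<longrightarrow> 0 \<le> \<alpha> i"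
    and neg: "\<forall>i\<in>J. P i = -\<infinity> \<longrightarrow> \<alpha> i \<le> 0"
    and c: "\<forall>i\<in>J. \<bar>P i\<bar> \<noteq> \<infinity> \<longrightarrow> ereal (c i) = P i"
  have "ereal (\<alpha> i * c i) \<le> ereal (\<alpha> i) * P i" if "i \<in> J" for i
    using that pos neg c by (cases "P i"; cases "\<alpha> i = 0") auto
  then have "ereal (\<Sum>i\<in>J. \<alpha> i * c i) \<le> (\<Sum>i\<in>J. ereal (\<alpha> i) * P i)"
    by (simp add: sum_mono flip: sum_ereal)
  also have "\<dots> \<le> (SUP \<omega>. ereal (\<Sum>i\<in>J. \<alpha> i * X i \<omega>))"
    by (rule extended_coherent_sum_le_SUP[OF ext fin])
      (use pos neg in \<open>unfold ereal_mult_neq_MInfty_iff, blast\<close>)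
  finally have "ereal (\<Sum>i\<in>J. \<alpha> i * c i) \<le> (SUP \<omega>. ereal (\<Sum>i\<in>J. \<alpha> i * X i \<omega>))" .
  moreover have "(\<Sum>i\<in>J. \<alpha> i * (X i \<omega> - c i)) = (\<Sum>i\<in>J. \<alpha> i * X i \<omega>) - (\<Sum>i\<in>J. \<alpha> i * c i)" for \<omega>
    by (simp add: right_diff_distrib sum_subtractf)
  ultimately show "0 \<le> (SUP \<omega>. ereal (\<Sum>i\<in>J. \<alpha> i * (X i \<omega> - c i)))"
    by (simp add: SUP_ereal_diff_nonneg_iff)
qed

lemma extended_coherent_if_coherent1:
  fixes X :: "'i \<Rightarrow> 'w \<Rightarrow> real" and P :: "'i \<Rightarrow> ereal"
  assumes coh: "coherent1 X P"
  shows "extended_coherent X P"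
  unfolding extended_coherent_def
proof (intro allI impI conjI)
  fix n :: nat and idx :: "nat \<Rightarrow> 'i" and \<alpha> :: "nat \<Rightarrow> real"
  let ?t = "\<lambda>j. ereal (\<alpha> j) * P (idx j)"
  assume "\<forall>j<n. \<forall>k<n. \<bar>?t j\<bar> = \<infinity> \<longrightarrow> \<bar>?t k\<bar> = \<infinity> \<longrightarrow> ?t j = ?t k"
  then have unmixed: "\<not> (\<exists>j<n. ?t j = \<infinity>) \<or> \<not> (\<exists>k<n. ?t k = -\<infinity>)"
    by (metis abs_ereal.simps(2,3) MInfty_neq_PInfty(1))
  show "(\<Sum>j<n. ?t j) \<le> (SUP \<omega>. ereal (\<Sum>j<n. \<alpha> j * X (idx j) \<omega>))"
  proof (cases "\<exists>j<n. ?t j = -\<infinity>")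
    case True
    then obtain j where j: "j < n" "?t j = -\<infinity>" by blast
    have "\<forall>k<n. ?t k \<noteq> \<infinity>" using unmixed True by blast
    then have "(\<Sum>j<n. ?t j) = -\<infinity>"
      by (intro sum_MInfty[OF finite_lessThan, where i = j]) (use j in simp_all)
    then show ?thesis by simp
  next
    case False
    then show ?thesis by (intro coherent1_sum_le_SUP[OF coh]) blast
  qed
  show "(INF \<omega>. ereal (\<Sum>j<n. \<alpha> j * X (idx j) \<omega>)) \<le> (\<Sum>j<n. ?t j)"
  proof (cases "\<exists>j<n. ?t j = \<infinity>")
    case True
    then have "(\<Sum>j<n. ?t j) = \<infinity>" by (metis finite_lessThan lessThan_iff sum_Pinfty)
    then show ?thesis by simp
  next
    case False
    then show ?thesis by (intro coherent1_INF_le_sum[OF coh]) blast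
  qed
qed

theorem lemma3p1:
  fixes X :: "'i \<Rightarrow> 'w \<Rightarrow> real" and P :: "'i \<Rightarrow> ereal"
  shows "extended_coherent X P \<longleftrightarrow> coherent1 X P"
  using coherent1_if_extended_coherent extended_coherent_if_coherent1 by blast

end
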